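(* Let $G$, $\mathrm{b}$, $(w_{ij})$, the messages $m_{j\to i}(t)$ of Sync-BP, and the quantities $n_{j\to i}(t)$ be as in the context. Then for every edge $\{i,j\}$ of $G$ and every $t=0,1,2,\dots$, $n_{j\to i}(t)=m_{j\to i}(t)$.
   Context: Let $G=(V,E)$ be a finite undirected simple graph, $V=\{1,\dots,n\}$, with real edge weights $w_{ij}$ and positive integers $b_1,\dots,b_n$ with $\deg_G(i)\ge b_i+1$ for all $i$; $N(i)$ is the neighbour set of $i$. Sync-BP messages: $m_{i\to j}(0)=w_{ij}$ and for $t\ge1$, $m_{i\to j}(t)=w_{ij}-\big(b_i\text{-th smallest of }\{m_{\ell\to i}(t-1):\ell\in N(i)\setminus\{j\}\}\big)$, for each ordered pair with $\{i,j\}\in E$. Computation tree: for $i\in V$ and $t\ge0$, $T_i^t$ is the rooted labelled tree with levels $0,1,\dots,t+1$ defined by: the root (level 0) has label $i$; the root has $\deg_G(i)$ children whose labels are exactly the elements of $N(i)$; a node at level $1\le k\le t$ with label $s$ whose parent has label $r$ has children whose labels are exactly the elements of $N(s)\setminus\{r\}$; nodes at level $t+1$ are leaves. An edge between nodes labelled $a,c$ has weight $w_{ac}$. For a child $i_j$ of the root, $T^t_{i_j\to i}$ denotes the subtree consisting of the root edge $(i,i_j)$ together with $i_j$ and all its descendants. A perfect tree-$\mathrm{b}$-matching of such a tree is a set of its edges such that each non-leaf node with label $s$ (other than the root $i$ in the case of $T^t_{i_j\to i}$) is incident to exactly $b_s$ edges of the set. Let $W^+_{i_j\to i}(t)$ (resp.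 $W^-_{i_j\to i}(t)$) be the minimum weight of a perfect tree-$\mathrm{b}$-matching of $T^t_{i_j\to i}$ that contains (resp. does not contain) the root edge $(i,i_j)$, and $n_{i_j\to i}(t)=W^+_{i_j\to i}(t)-W^-_{i_j\to i}(t)$; this is well-defined for every edge $\{i,j\}$ of $G$ via $n_{j\to i}(t)$. *)

theory Defs
  imports Complex_Main "HOL-Library.Multiset"
begin

text \<open>Graph: vertex set {1..n}, symmetric irreflexive adjacency relation E.\<close>

definition nbr :: "nat \<Rightarrow> (nat \<Rightarrow> nat \<Rightarrow> bool) \<Rightarrow> nat \<Rightarrow> nat set" where
  "nbr n E i = {j \<in> {1..n}. E i j}"

definition kth_smallest :: "nat \<Rightarrow> real multiset \<Rightarrow> real" where
  "kth_smallest k M = sorted_list_of_multiset M ! (k - 1)"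

text \<open>Sync-BP messages: msg n E w b t i j is m_{i->j}(t).\<close>
fun msg :: "nat \<Rightarrow> (nat \<Rightarrow> nat \<Rightarrow> bool) \<Rightarrow> (nat \<Rightarrow> nat \<Rightarrow> real) \<Rightarrow> (nat \<Rightarrow> nat)
            \<Rightarrow> nat \<Rightarrow> nat \<Rightarrow> nat \<Rightarrow> real" where
  "msg n E w b 0 i j = w i j"
| "msg n E w b (Suc t) i j =
     w i j - kth_smallest (b i)
       (image_mset (\<lambda>l. msg n E w b t l i) (mset_set (nbr n E i - {j})))"

text \<open>Nodes of a computation tree are identified with the label sequence of the path
  from the root: a non-backtracking walk (consecutive labels adjacent, and a child's
  label differs from its grandparent's label).\<close>
definition nb_walk :: "nat \<Rightarrow> (nat \<Rightarrow> nat \<Rightarrow> bool) \<Rightarrow> nat list \<Rightarrow> bool" where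
  "nb_walk n E p \<longleftrightarrow> set p \<subseteq> {1..n} \<and>
     (\<forall>k. Suc k < length p \<longrightarrow> E (p ! k) (p ! Suc k)) \<and>
     (\<forall>k. k + 2 < length p \<longrightarrow> p ! (k + 2) \<noteq> p ! k)"

text \<open>Edges of the subtree T^t_{j->i} of T_i^t: each tree edge is identified with its
  lower endpoint (child node).\<close>
definition sub_edges :: "nat \<Rightarrow> (nat \<Rightarrow> nat \<Rightarrow> bool) \<Rightarrow> nat \<Rightarrow> nat \<Rightarrow> nat \<Rightarrow> nat list set" where
  "sub_edges n E t j i = {p. nb_walk n E p \<and> 2 \<le> length p \<and> length p \<le> t + 2 \<and> take 2 p = [i, j]}"

definition tedge_weight :: "(nat \<Rightarrow> nat \<Rightarrow> real) \<Rightarrow> nat list \<Rightarrow> real" where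
  "tedge_weight w p = w (last (butlast p)) (last p)"

text \<open>Perfect tree-b-matching of T^t_{j->i}: a set of edges such that every non-leaf
  node other than the root i (i.e. the nodes at levels 1..t) with label s is incident
  to exactly b s edges of the set. The edges incident to node p are p itself
  (edge to the parent) and the edges to its children.\<close>
definition perfect_tbm :: "nat \<Rightarrow> (nat \<Rightarrow> nat \<Rightarrow> bool) \<Rightarrow> (nat \<Rightarrow> nat) \<Rightarrow> nat \<Rightarrow> nat \<Rightarrow> nat
                            \<Rightarrow> nat list set \<Rightarrow> bool" where
  "perfect_tbm n E b t j i M \<longleftrightarrow> M \<subseteq> sub_edges n E t j i \<and>
     (\<forall>p \<in> sub_edges n E t j i. length p \<le> t + 1 \<longrightarrow>
        card {q \<in> M. q = p \<or> butlast q = p} = b (last p))"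

definition W_plus :: "nat \<Rightarrow> (nat \<Rightarrow> nat \<Rightarrow> bool) \<Rightarrow> (nat \<Rightarrow> nat \<Rightarrow> real) \<Rightarrow> (nat \<Rightarrow> nat)
                      \<Rightarrow> nat \<Rightarrow> nat \<Rightarrow> nat \<Rightarrow> real" where
  "W_plus n E w b t j i = Min ((\<lambda>M. \<Sum>q\<in>M. tedge_weight w q) `
      {M. perfect_tbm n E b t j i M \<and> [i, j] \<in> M})"

definition W_minus :: "nat \<Rightarrow> (nat \<Rightarrow> nat \<Rightarrow> bool) \<Rightarrow> (nat \<Rightarrow> nat \<Rightarrow> real) \<Rightarrow> (nat \<Rightarrow> nat)
                      \<Rightarrow> nat \<Rightarrow> nat \<Rightarrow> nat \<Rightarrow> real" where
  "W_minus n E w b t j i = Min ((\<lambda>M. \<Sum>q\<in>M. tedge_weight w q) `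
      {M. perfect_tbm n E b t j i M \<and> [i, j] \<notin> M})"

definition tree_msg :: "nat \<Rightarrow> (nat \<Rightarrow> nat \<Rightarrow> bool) \<Rightarrow> (nat \<Rightarrow> nat \<Rightarrow> real) \<Rightarrow> (nat \<Rightarrow> nat)
                      \<Rightarrow> nat \<Rightarrow> nat \<Rightarrow> nat \<Rightarrow> real" where
  "tree_msg n E w b t j i = W_plus n E w b t j i - W_minus n E w b t j i"

end

theory Submission
  imports Defs
begin

text \<open>Cutting \<open>T\<^sup>t\<^sup>+\<^sup>1_{j\<rightarrow>i}\<close> at node \<open>j\<close> leaves the root edge and the subtrees
  \<open>T\<^sup>t_{k\<rightarrow>j}\<close>, \<open>k \<in> N(j) - {i}\<close>. A perfect tree-b-matching is thus exactly a choice of the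
  root edge, a set \<open>S\<close> of children whose edge to \<open>j\<close> is matched with \<open>|S|\<close> equal to
  \<open>b\<^sub>j\<close> minus the root-edge choice, and independent perfect tree-b-matchings of the
  subtrees containing their root edge exactly for \<open>k \<in> S\<close>. Minimising, \<open>W\<^sup>+\<close> (resp. \<open>W\<^sup>-\<close>)
  is \<open>w\<^sub>i\<^sub>j\<close> (resp. 0) plus \<open>\<Sum>\<^sub>k W\<^sup>-_{k\<rightarrow>j}\<close> plus the sum of the \<open>b\<^sub>j - 1\<close> (resp. \<open>b\<^sub>j\<close>)
  smallest values \<open>n_{k\<rightarrow>j}\<close>; their difference is \<open>w\<^sub>i\<^sub>j\<close> minus the \<open>b\<^sub>j\<close>-th smallest
  \<open>n_{k\<rightarrow>j}\<close>. This is the Sync-BP update, so \<open>n = m\<close> follows by induction on \<open>t\<close>.\<close>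

definition min_subset_sum :: "'a set \<Rightarrow> ('a \<Rightarrow> 'b::{linorder, ordered_comm_monoid_add}) \<Rightarrow> nat \<Rightarrow> 'b" where
  "min_subset_sum A f m = Min (sum f ` {S. S \<subseteq> A \<and> card S = m})"

lemma finite_subsets_with_card: "finite A \<Longrightarrow> finite {S. S \<subseteq> A \<and> card S = m}"
  by (rule finite_subset[of _ "Pow A"]) auto

lemma min_subset_sum_le: "finite A \<Longrightarrow> S \<subseteq> A \<Longrightarrow> card S = m \<Longrightarrow> min_subset_sum A f m \<le> sum f S"
  unfolding min_subset_sum_def by (rule Min_le) (auto intro: finite_subsets_with_card)

lemma min_subset_sum_attained:
  assumes "finite A" "m \<le> card A"
  obtains S where "S \<subseteq> A" "card S = m" "sum f S = min_subset_sum A f m"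
proof -
  obtain T where "T \<subseteq> A" "card T = m" using obtain_subset_with_card_n[OF assms(2)] by metis
  then have "min_subset_sum A f m \<in> sum f ` {S. S \<subseteq> A \<and> card S = m}"
    unfolding min_subset_sum_def by (intro Min_in) (auto intro: finite_subsets_with_card[OF assms(1)])
  then show ?thesis using that by auto
qed

lemma min_subset_sum_Suc:
  assumes "finite A" "Suc m \<le> card A" "a \<in> A" "\<forall>x\<in>A. f a \<le> f x"
  shows "min_subset_sum A f (Suc m) = f a + min_subset_sum (A - {a}) f m"
  unfolding min_subset_sum_def[of A]
proof (rule Min_eqI)
  show "finite (sum f ` {S. S \<subseteq> A \<and> card S = Suc m})"
    using finite_subsets_with_card[OF assms(1)] by auto
next
  fix y assume "y \<in> sum f ` {S. S \<subseteq> A \<and> card S = Suc m}"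
  then obtain S where S: "S \<subseteq> A" "card S = Suc m" "y = sum f S" by auto
  then obtain s where s: "s \<in> S" "a \<in> S \<Longrightarrow> s = a" by (metis card_eq_0_iff ex_in_conv nat.simps(3))
  have "finite S" using S assms(1) finite_subset by blast
  then have "sum f S = f s + sum f (S - {s})" using s by (simp add: sum.remove)
  moreover have "min_subset_sum (A - {a}) f m \<le> sum f (S - {s})"
    using S s \<open>finite S\<close> assms(1) by (intro min_subset_sum_le) auto
  moreover have "f a \<le> f s" using assms(4) S s by auto
  ultimately show "f a + min_subset_sum (A - {a}) f m \<le> y" using S(3) add_mono by metis
next
  have "finite (A - {a})" "m \<le> card (A - {a})" using assms by auto
  then obtain S where S: "S \<subseteq> A - {a}" "card S = m" "sum f S = min_subset_sum (A - {a}) f m"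
    by (rule min_subset_sum_attained)
  then have "finite S" "a \<notin> S" using assms(1) finite_subset by blast+
  then have "sum f (insert a S) = f a + min_subset_sum (A - {a}) f m" "card (insert a S) = Suc m"
    using S by auto
  moreover have "insert a S \<subseteq> A" using S assms(3) by auto
  ultimately show "f a + min_subset_sum (A - {a}) f m \<in> sum f ` {S. S \<subseteq> A \<and> card S = Suc m}"
    by (metis (mono_tags, lifting) image_eqI mem_Collect_eq)
qed

lemma min_subset_sum_eq_sum_take_sorted:
  "finite A \<Longrightarrow> m \<le> card A \<Longrightarrow>
   min_subset_sum A f m = sum_list (take m (sorted_list_of_multiset (image_mset f (mset_set A))))"
proof (induction m arbitrary: A)
  case 0
  then have "{S. S \<subseteq> A \<and> card S = 0} = {{}}" by (auto dest: finite_subset)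
  then show ?case by (simp add: min_subset_sum_def)
next
  case (Suc m)
  then have "A \<noteq> {}" by auto
  then have "Min (f ` A) \<in> f ` A" using Suc.prems(1) by simp
  then obtain a where a: "a \<in> A" "f a = Min (f ` A)" by auto
  have a_min: "\<forall>x\<in>A. f a \<le> f x" using a Suc.prems(1) by auto
  have "mset_set A = add_mset a (mset_set (A - {a}))"
    using Suc.prems(1) a by (simp add: mset_set.remove)
  then have "sorted_list_of_multiset (image_mset f (mset_set A))
      = f a # sorted_list_of_multiset (image_mset f (mset_set (A - {a})))"
    using a_min Suc.prems(1) by (simp add: insort_is_Cons)
  then show ?case
    using min_subset_sum_Suc[OF Suc.prems a(1) a_min] Suc.IH[of "A - {a}"] Suc.prems a by simp
qed

lemma min_subset_sum_diff_eq_kth_smallest: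
  fixes f :: "'a \<Rightarrow> real"
  assumes "finite A" "1 \<le> k" "k \<le> card A"
  shows "min_subset_sum A f k - min_subset_sum A f (k - 1) = kth_smallest k (image_mset f (mset_set A))"
proof -
  let ?L = "sorted_list_of_multiset (image_mset f (mset_set A))"
  have "length ?L = card A"
    by (metis mset_sorted_list_of_multiset size_mset size_image_mset size_mset_set)
  then have "take k ?L = take (k - 1) ?L @ [?L ! (k - 1)]"
    using assms by (metis Suc_diff_le diff_Suc_1 le_eq_less_or_eq less_le_trans take_Suc_conv_app_nth diff_less zero_less_one)
  then show ?thesis
    using assms min_subset_sum_eq_sum_take_sorted[OF assms(1), of k f]
      min_subset_sum_eq_sum_take_sorted[OF assms(1), of "k - 1" f]
    by (simp add: kth_smallest_def)
qed

lemma sum_if_mem_eq: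
  fixes p q :: "'a \<Rightarrow> 'b::ab_group_add"
  assumes "finite A" "S \<subseteq> A"
  shows "(\<Sum>k\<in>A. if k \<in> S then p k else q k) = (\<Sum>k\<in>A. q k) + (\<Sum>k\<in>S. p k - q k)"
proof -
  have "(\<Sum>k\<in>A. if k \<in> S then p k else q k) = (\<Sum>k\<in>A. q k + (if k \<in> S then p k - q k else 0))"
    by (rule sum.cong) auto
  also have "\<dots> = (\<Sum>k\<in>A. q k) + (\<Sum>k\<in>S. p k - q k)"
    using assms by (simp add: sum.distrib sum.If_cases Int_absorb1)
  finally show ?thesis .
qed

lemma all_nat_iff_0_and_Suc: "(\<forall>k::nat. P k) \<longleftrightarrow> P 0 \<and> (\<forall>k. P (Suc k))"
  by (metis not0_implies_Suc)

lemma nb_walk_Cons_Cons_Cons: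
  "nb_walk n E (a # c # d # r) \<longleftrightarrow> a \<in> {1..n} \<and> E a c \<and> d \<noteq> a \<and> nb_walk n E (c # d # r)"
  unfolding nb_walk_def
  by (subst all_nat_iff_0_and_Suc, subst (2) all_nat_iff_0_and_Suc) auto

lemma nb_walk_pair: "nb_walk n E [a, c] \<longleftrightarrow> a \<in> {1..n} \<and> c \<in> {1..n} \<and> E a c"
  unfolding nb_walk_def by (subst all_nat_iff_0_and_Suc) auto

lemma nb_walk_Cons_Cons_edge: "nb_walk n E (a # c # r) \<Longrightarrow> E a c"
  unfolding nb_walk_def by (metis Suc_less_eq length_Cons nth_Cons_0 nth_Cons_Suc zero_less_Suc)

locale bmatching_graph =
  fixes n :: nat and E :: "nat \<Rightarrow> nat \<Rightarrow> bool" and w :: "nat \<Rightarrow> nat \<Rightarrow> real"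
    and b :: "nat \<Rightarrow> nat"
  assumes E_in_V: "\<And>i j. E i j \<Longrightarrow> i \<in> {1..n} \<and> j \<in> {1..n}"
    and E_sym: "\<And>i j. E i j \<Longrightarrow> E j i"
    and w_sym: "\<And>i j. E i j \<Longrightarrow> w i j = w j i"
    and b_pos: "\<And>i. i \<in> {1..n} \<Longrightarrow> 1 \<le> b i"
    and deg: "\<And>i. i \<in> {1..n} \<Longrightarrow> b i + 1 \<le> card (nbr n E i)"
begin

definition child_labels :: "nat \<Rightarrow> nat \<Rightarrow> nat set" where
  "child_labels j i = nbr n E j - {i}"

definition tbm_weight :: "nat list set \<Rightarrow> real" where
  "tbm_weight M = (\<Sum>q\<in>M. tedge_weight w q)"

definition perfect_tbms :: "nat \<Rightarrow> nat \<Rightarrow> nat \<Rightarrow> bool \<Rightarrow> nat list set set" where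
  "perfect_tbms t j i c = {M. perfect_tbm n E b t j i M \<and> ([i, j] \<in> M \<longleftrightarrow> c)}"

definition min_tbm_weight :: "nat \<Rightarrow> nat \<Rightarrow> nat \<Rightarrow> bool \<Rightarrow> real" where
  "min_tbm_weight t j i c = Min (tbm_weight ` perfect_tbms t j i c)"

text \<open>Tree edges are identified with root paths, so prefixing \<open>i\<close> embeds the edges of
  \<open>T\<^sup>t_{k\<rightarrow>j}\<close> into \<open>T\<^sup>t\<^sup>+\<^sup>1_{j\<rightarrow>i}\<close>; \<open>R \<subseteq> {[i, j]}\<close> is the choice of the root edge.\<close>
definition graft :: "nat \<Rightarrow> nat \<Rightarrow> nat list set \<Rightarrow> (nat \<Rightarrow> nat list set) \<Rightarrow> nat list set" where
  "graft i j R Mk = R \<union> (\<Union>k\<in>child_labels j i. Cons i ` Mk k)"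

definition graftable :: "nat \<Rightarrow> nat \<Rightarrow> nat \<Rightarrow> nat list set \<Rightarrow> (nat \<Rightarrow> nat list set) \<Rightarrow> bool" where
  "graftable t i j R Mk \<longleftrightarrow> R \<subseteq> {[i, j]} \<and> (\<forall>k\<in>child_labels j i. Mk k \<subseteq> sub_edges n E t k j)"

lemma finite_child_labels: "finite (child_labels j i)"
  unfolding child_labels_def nbr_def by auto

lemma child_labels_edge: "k \<in> child_labels j i \<Longrightarrow> E j k \<and> k \<noteq> i"
  unfolding child_labels_def nbr_def by auto

lemma card_child_labels: "E i j \<Longrightarrow> card (child_labels j i) + 1 = card (nbr n E j)"
proof -
  assume ij: "E i j"
  have "i \<in> nbr n E j" unfolding nbr_def using E_in_V[OF ij] E_sym[OF ij] by auto
  moreover have "finite (nbr n E j)" unfolding nbr_def by auto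
  ultimately show ?thesis unfolding child_labels_def
    by (metis card_Suc_Diff1 Suc_eq_plus1)
qed

lemma finite_sub_edges: "finite (sub_edges n E t j i)"
proof (rule finite_subset)
  show "sub_edges n E t j i \<subseteq> {xs. set xs \<subseteq> {1..n} \<and> length xs \<le> t + 2}"
    unfolding sub_edges_def nb_walk_def by auto
  show "finite {xs. set xs \<subseteq> {1..n} \<and> length xs \<le> t + 2}"
    by (rule finite_lists_length_le) auto
qed

lemma sub_edges_ConsE:
  assumes "q \<in> sub_edges n E t k j"
  obtains r where "q = j # k # r"
  using assms unfolding sub_edges_def by (cases q; cases "tl q") auto

lemma length_sub_edges: "q \<in> sub_edges n E t k j \<Longrightarrow> 2 \<le> length q \<and> length q \<le> t + 2"
  unfolding sub_edges_def by auto

lemma root_edge_in_sub_edges: "E i j \<Longrightarrow> [i, j] \<in> sub_edges n E t j i"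
  unfolding sub_edges_def using nb_walk_pair E_in_V by auto

lemma sub_edges_0: "E i j \<Longrightarrow> sub_edges n E 0 j i = {[i, j]}"
proof (rule set_eqI, rule iffI)
  fix p assume p: "p \<in> sub_edges n E 0 j i"
  then obtain r where "p = i # j # r" by (rule sub_edges_ConsE)
  then show "p \<in> {[i, j]}" using length_sub_edges[OF p] by auto
qed (auto intro: root_edge_in_sub_edges)

lemma sub_edges_Suc:
  assumes ij: "E i j"
  shows "sub_edges n E (Suc t) j i = insert [i, j] (\<Union>k\<in>child_labels j i. Cons i ` sub_edges n E t k j)"
proof (rule set_eqI, rule iffI)
  fix p assume p: "p \<in> sub_edges n E (Suc t) j i"
  then obtain r where pr: "p = i # j # r" by (rule sub_edges_ConsE)
  show "p \<in> insert [i, j] (\<Union>k\<in>child_labels j i. Cons i ` sub_edges n E t k j)"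
  proof (cases r)
    case Nil then show ?thesis using pr by simp
  next
    case (Cons k r')
    have "nb_walk n E (i # j # k # r')" using p pr Cons unfolding sub_edges_def by simp
    then have "k \<noteq> i" "nb_walk n E (j # k # r')" "E j k"
      by (auto simp: nb_walk_Cons_Cons_Cons dest: nb_walk_Cons_Cons_edge)
    then have "k \<in> child_labels j i" "j # k # r' \<in> sub_edges n E t k j"
      using p pr Cons E_in_V unfolding child_labels_def nbr_def sub_edges_def by auto
    then show ?thesis using pr Cons by blast
  qed
next
  fix p assume "p \<in> insert [i, j] (\<Union>k\<in>child_labels j i. Cons i ` sub_edges n E t k j)"
  then consider "p = [i, j]"
    | k q where "k \<in> child_labels j i" "q \<in> sub_edges n E t k j" "p = i # q" by blast
  then show "p \<in> sub_edges n E (Suc t) j i"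
  proof cases
    case 1 then show ?thesis using root_edge_in_sub_edges[OF ij] by simp
  next
    case 2
    then obtain r where q: "q = j # k # r" by (auto elim: sub_edges_ConsE)
    have "nb_walk n E q" using 2 unfolding sub_edges_def by simp
    then have "nb_walk n E p"
      using 2 q nb_walk_Cons_Cons_Cons E_in_V[OF ij] ij child_labels_edge by auto
    then show ?thesis using 2 q length_sub_edges[OF 2(2)] unfolding sub_edges_def by auto
  qed
qed

lemma tedge_weight_Cons: "2 \<le> length q \<Longrightarrow> tedge_weight w (i # q) = tedge_weight w q"
  unfolding tedge_weight_def by (cases q rule: rev_cases) (auto simp: butlast_append)

lemma graft_subset_sub_edges:
  "E i j \<Longrightarrow> graftable t i j R Mk \<Longrightarrow> graft i j R Mk \<subseteq> sub_edges n E (Suc t) j i"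
  unfolding graft_def graftable_def sub_edges_Suc by blast

lemma graft_decomposition:
  assumes "E i j" "M \<subseteq> sub_edges n E (Suc t) j i"
  defines "Mk \<equiv> \<lambda>k. {q \<in> sub_edges n E t k j. i # q \<in> M}"
  shows "M = graft i j (M \<inter> {[i, j]}) Mk" and "graftable t i j (M \<inter> {[i, j]}) Mk"
  using assms unfolding graft_def graftable_def sub_edges_Suc[OF assms(1)] by blast+

lemma root_incident_edges_graft:
  assumes "graftable t i j R Mk"
  shows "{q \<in> graft i j R Mk. q = [i, j] \<or> butlast q = [i, j]}
       = R \<union> (\<lambda>k. [i, j, k]) ` {k \<in> child_labels j i. [j, k] \<in> Mk k}"
proof (rule set_eqI, rule iffI)
  fix x assume x: "x \<in> {q \<in> graft i j R Mk. q = [i, j] \<or> butlast q = [i, j]}"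
  show "x \<in> R \<union> (\<lambda>k. [i, j, k]) ` {k \<in> child_labels j i. [j, k] \<in> Mk k}"
  proof (cases "x \<in> R")
    case False
    then obtain k q where kq: "k \<in> child_labels j i" "q \<in> Mk k" "x = i # q"
      using x unfolding graft_def by blast
    then have "q \<in> sub_edges n E t k j" using assms unfolding graftable_def by blast
    then obtain r where r: "q = j # k # r" by (rule sub_edges_ConsE)
    then have "r = []" using x kq by (auto split: if_splits)
    then show ?thesis using kq r by auto
  qed simp
next
  fix x assume "x \<in> R \<union> (\<lambda>k. [i, j, k]) ` {k \<in> child_labels j i. [j, k] \<in> Mk k}"
  then show "x \<in> {q \<in> graft i j R Mk. q = [i, j] \<or> butlast q = [i, j]}"
    using assms unfolding graft_def graftable_def by auto
qed

lemma card_root_incident_edges_graft: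
  assumes "graftable t i j R Mk"
  shows "card {q \<in> graft i j R Mk. q = [i, j] \<or> butlast q = [i, j]}
       = card R + card {k \<in> child_labels j i. [j, k] \<in> Mk k}"
proof -
  have "finite R" using assms unfolding graftable_def by (auto intro: finite_subset)
  moreover have "R \<inter> (\<lambda>k. [i, j, k]) ` {k \<in> child_labels j i. [j, k] \<in> Mk k} = {}"
    using assms unfolding graftable_def by auto
  moreover have "card ((\<lambda>k. [i, j, k]) ` {k \<in> child_labels j i. [j, k] \<in> Mk k})
      = card {k \<in> child_labels j i. [j, k] \<in> Mk k}"
    by (rule card_image) (auto simp: inj_on_def)
  ultimately show ?thesis
    unfolding root_incident_edges_graft[OF assms] using finite_child_labels
    by (simp add: card_Un_disjoint)
qed

lemma node_incident_edges_graft: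
  assumes "graftable t i j R Mk" "k \<in> child_labels j i" "q \<in> sub_edges n E t k j"
  shows "{x \<in> graft i j R Mk. x = i # q \<or> butlast x = i # q}
       = Cons i ` {r \<in> Mk k. r = q \<or> butlast r = q}"
proof (rule set_eqI, rule iffI)
  obtain s where s: "q = j # k # s" using assms(3) by (rule sub_edges_ConsE)
  fix x assume x: "x \<in> {x \<in> graft i j R Mk. x = i # q \<or> butlast x = i # q}"
  show "x \<in> Cons i ` {r \<in> Mk k. r = q \<or> butlast r = q}"
  proof (cases "x \<in> R")
    case True then show ?thesis using x s assms(1) unfolding graftable_def by auto
  next
    case False
    then obtain k' r where kr: "k' \<in> child_labels j i" "r \<in> Mk k'" "x = i # r"
      using x unfolding graft_def by blast
    then have "r \<in> sub_edges n E t k' j" using assms unfolding graftable_def by blast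
    then obtain r' where r': "r = j # k' # r'" by (rule sub_edges_ConsE)
    have "k' = k \<and> (r = q \<or> butlast r = q)" using x kr r' s by (auto split: if_splits)
    then show ?thesis using kr by auto
  qed
next
  fix x assume "x \<in> Cons i ` {r \<in> Mk k. r = q \<or> butlast r = q}"
  then obtain r where r: "r \<in> Mk k" "r = q \<or> butlast r = q" "x = i # r" by blast
  have "r \<noteq> []" using r length_sub_edges[OF assms(3)] by auto
  then show "x \<in> {x \<in> graft i j R Mk. x = i # q \<or> butlast x = i # q}"
    using r assms(2) unfolding graft_def by auto
qed

lemma card_node_incident_edges_graft:
  assumes "graftable t i j R Mk" "k \<in> child_labels j i" "q \<in> sub_edges n E t k j"
  shows "card {x \<in> graft i j R Mk. x = i # q \<or> butlast x = i # q}
       = card {r \<in> Mk k. r = q \<or> butlast r = q}"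
  unfolding node_incident_edges_graft[OF assms] by (rule card_image) auto

lemma perfect_tbm_graftD:
  assumes ij: "E i j" and ok: "graftable t i j R Mk"
    and P: "perfect_tbm n E b (Suc t) j i (graft i j R Mk)"
  shows "\<forall>k\<in>child_labels j i. perfect_tbm n E b t k j (Mk k)"
    and "card R + card {k \<in> child_labels j i. [j, k] \<in> Mk k} = b j"
proof -
  show "card R + card {k \<in> child_labels j i. [j, k] \<in> Mk k} = b j"
    using P root_edge_in_sub_edges[OF ij, of "Suc t"]
    unfolding perfect_tbm_def card_root_incident_edges_graft[OF ok, symmetric] by auto
  show "\<forall>k\<in>child_labels j i. perfect_tbm n E b t k j (Mk k)"
    unfolding perfect_tbm_def
  proof (intro ballI conjI impI)
    fix k assume k: "k \<in> child_labels j i"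
    then show "Mk k \<subseteq> sub_edges n E t k j" using ok unfolding graftable_def by auto
    fix q assume q: "q \<in> sub_edges n E t k j" "length q \<le> t + 1"
    have "i # q \<in> sub_edges n E (Suc t) j i" unfolding sub_edges_Suc[OF ij] using q k by blast
    then have "card {x \<in> graft i j R Mk. x = i # q \<or> butlast x = i # q} = b (last (i # q))"
      using P q unfolding perfect_tbm_def by auto
    moreover have "last (i # q) = last q" using length_sub_edges[OF q(1)] by auto
    ultimately show "card {r \<in> Mk k. r = q \<or> butlast r = q} = b (last q)"
      using card_node_incident_edges_graft[OF ok k q(1)] by simp
  qed
qed

lemma perfect_tbm_graftI:
  assumes ij: "E i j" and ok: "graftable t i j R Mk"
    and Mk: "\<forall>k\<in>child_labels j i. perfect_tbm n E b t k j (Mk k)"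
    and root: "card R + card {k \<in> child_labels j i. [j, k] \<in> Mk k} = b j"
  shows "perfect_tbm n E b (Suc t) j i (graft i j R Mk)"
  unfolding perfect_tbm_def
proof (intro conjI ballI impI)
  show "graft i j R Mk \<subseteq> sub_edges n E (Suc t) j i" by (rule graft_subset_sub_edges[OF ij ok])
  fix p assume p: "p \<in> sub_edges n E (Suc t) j i" "length p \<le> Suc t + 1"
  then consider "p = [i, j]"
    | k q where "k \<in> child_labels j i" "q \<in> sub_edges n E t k j" "p = i # q"
    unfolding sub_edges_Suc[OF ij] by blast
  then show "card {q \<in> graft i j R Mk. q = p \<or> butlast q = p} = b (last p)"
  proof cases
    case 1 then show ?thesis using root card_root_incident_edges_graft[OF ok] by simp
  next
    case 2
    have "last p = last q" using 2 length_sub_edges[OF 2(2)] by auto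
    moreover have "length q \<le> t + 1" using 2 p by simp
    ultimately show ?thesis
      using card_node_incident_edges_graft[OF ok 2(1,2)] Mk 2 unfolding perfect_tbm_def by auto
  qed
qed

lemma tbm_weight_graft:
  assumes ok: "graftable t i j R Mk"
  shows "tbm_weight (graft i j R Mk) = tbm_weight R + (\<Sum>k\<in>child_labels j i. tbm_weight (Mk k))"
proof -
  have fin_Mk: "finite (Mk k)" if "k \<in> child_labels j i" for k
    using ok that finite_sub_edges unfolding graftable_def by (meson finite_subset)
  have "finite R" using ok unfolding graftable_def by (auto intro: finite_subset)
  moreover have "R \<inter> (\<Union>k\<in>child_labels j i. Cons i ` Mk k) = {}"
    using ok length_sub_edges unfolding graftable_def by fastforce
  ultimately have "tbm_weight (graft i j R Mk) = tbm_weight R + tbm_weight (\<Union>k\<in>child_labels j i. Cons i ` Mk k)"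
    unfolding tbm_weight_def graft_def using fin_Mk finite_child_labels
    by (intro sum.union_disjoint) auto
  also have "tbm_weight (\<Union>k\<in>child_labels j i. Cons i ` Mk k)
      = (\<Sum>k\<in>child_labels j i. tbm_weight (Cons i ` Mk k))"
    unfolding tbm_weight_def
  proof (rule sum.UNION_disjoint)
    show "\<forall>k\<in>child_labels j i. \<forall>k'\<in>child_labels j i. k \<noteq> k' \<longrightarrow> Cons i ` Mk k \<inter> Cons i ` Mk k' = {}"
      using ok unfolding graftable_def by (blast elim: sub_edges_ConsE)
  qed (use finite_child_labels fin_Mk in auto)
  also have "\<dots> = (\<Sum>k\<in>child_labels j i. tbm_weight (Mk k))"
  proof (rule sum.cong[OF refl])
    fix k assume k: "k \<in> child_labels j i"
    have "tbm_weight (Cons i ` Mk k) = (\<Sum>q\<in>Mk k. tedge_weight w (i # q))"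
      unfolding tbm_weight_def by (subst sum.reindex) auto
    also have "\<dots> = tbm_weight (Mk k)" unfolding tbm_weight_def
      using ok k length_sub_edges unfolding graftable_def by (intro sum.cong[OF refl] tedge_weight_Cons) blast
    finally show "tbm_weight (Cons i ` Mk k) = tbm_weight (Mk k)" .
  qed
  finally show ?thesis .
qed

lemma tbm_weight_root_part: "tbm_weight (if c then {[i, j]} else {}) = (if c then w i j else 0)"
  unfolding tbm_weight_def tedge_weight_def by simp

lemma perfect_tbms_subset_sub_edges: "M \<in> perfect_tbms t j i c \<Longrightarrow> M \<subseteq> sub_edges n E t j i"
  unfolding perfect_tbms_def perfect_tbm_def by auto

lemma finite_perfect_tbms: "finite (perfect_tbms t j i c)"
  by (rule finite_subset[of _ "Pow (sub_edges n E t j i)"])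
    (auto dest: perfect_tbms_subset_sub_edges simp: finite_sub_edges)

lemma min_tbm_weight_le: "M \<in> perfect_tbms t j i c \<Longrightarrow> min_tbm_weight t j i c \<le> tbm_weight M"
  unfolding min_tbm_weight_def using finite_perfect_tbms by (intro Min_le) auto

lemma min_tbm_weight_attained:
  assumes "perfect_tbms t j i c \<noteq> {}"
  obtains M where "M \<in> perfect_tbms t j i c" "tbm_weight M = min_tbm_weight t j i c"
proof -
  have "min_tbm_weight t j i c \<in> tbm_weight ` perfect_tbms t j i c"
    unfolding min_tbm_weight_def using assms finite_perfect_tbms by (intro Min_in) auto
  then show ?thesis using that by auto
qed

lemma graft_in_perfect_tbms:
  assumes ij: "E i j" and S: "S \<subseteq> child_labels j i" "card S + of_bool c = b j"
    and Mk: "\<And>k. k \<in> child_labels j i \<Longrightarrow> Mk k \<in> perfect_tbms t k j (k \<in> S)"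
  shows "graft i j (if c then {[i, j]} else {}) Mk \<in> perfect_tbms (Suc t) j i c"
    and "tbm_weight (graft i j (if c then {[i, j]} else {}) Mk)
       = (if c then w i j else 0) + (\<Sum>k\<in>child_labels j i. tbm_weight (Mk k))"
proof -
  let ?R = "if c then {[i, j]} else {}"
  have "Mk k \<subseteq> sub_edges n E t k j" if "k \<in> child_labels j i" for k
    using perfect_tbms_subset_sub_edges[OF Mk[OF that]] .
  then have ok: "graftable t i j ?R Mk" unfolding graftable_def by simp
  have "{k \<in> child_labels j i. [j, k] \<in> Mk k} = S"
    using Mk S(1) unfolding perfect_tbms_def by auto
  then have "perfect_tbm n E b (Suc t) j i (graft i j ?R Mk)"
    using Mk S(2) unfolding perfect_tbms_def by (intro perfect_tbm_graftI[OF ij ok]) auto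
  moreover have "[i, j] \<notin> (\<Union>k\<in>child_labels j i. Cons i ` Mk k)"
    using ok length_sub_edges unfolding graftable_def by fastforce
  ultimately show "graft i j ?R Mk \<in> perfect_tbms (Suc t) j i c"
    unfolding perfect_tbms_def graft_def by auto
  show "tbm_weight (graft i j ?R Mk) = (if c then w i j else 0) + (\<Sum>k\<in>child_labels j i. tbm_weight (Mk k))"
    using tbm_weight_graft[OF ok] tbm_weight_root_part by simp
qed

lemma perfect_tbms_SucE:
  assumes ij: "E i j" and M: "M \<in> perfect_tbms (Suc t) j i c"
  obtains S Mk where "S \<subseteq> child_labels j i" "card S + of_bool c = b j"
    "\<And>k. k \<in> child_labels j i \<Longrightarrow> Mk k \<in> perfect_tbms t k j (k \<in> S)"
    "M = graft i j (if c then {[i, j]} else {}) Mk"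
proof -
  define Mk where "Mk = (\<lambda>k. {q \<in> sub_edges n E t k j. i # q \<in> M})"
  define S where "S = {k \<in> child_labels j i. [j, k] \<in> Mk k}"
  have R: "M \<inter> {[i, j]} = (if c then {[i, j]} else {})" using M unfolding perfect_tbms_def by auto
  note decomp = graft_decomposition[OF ij perfect_tbms_subset_sub_edges[OF M], folded Mk_def, unfolded R]
  have "perfect_tbm n E b (Suc t) j i (graft i j (if c then {[i, j]} else {}) Mk)"
    using M decomp(1) unfolding perfect_tbms_def by auto
  then have "(\<forall>k\<in>child_labels j i. perfect_tbm n E b t k j (Mk k)) \<and> of_bool c + card S = b j"
    using perfect_tbm_graftD[OF ij decomp(2)] unfolding S_def by (cases c) auto
  then show ?thesis
    using that[of S Mk] decomp(1) unfolding S_def perfect_tbms_def by auto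
qed

lemma perfect_tbms_nonempty: "E i j \<Longrightarrow> perfect_tbms t j i c \<noteq> {}"
proof (induction t arbitrary: i j c)
  case 0
  have "(if c then {[i, j]} else {}) \<in> perfect_tbms 0 j i c"
    unfolding perfect_tbms_def perfect_tbm_def sub_edges_0[OF 0] by auto
  then show ?case by blast
next
  case (Suc t)
  have "j \<in> {1..n}" using E_in_V[OF Suc.prems] by auto
  then have "b j - of_bool c \<le> card (child_labels j i)" "of_bool c \<le> b j"
    using deg b_pos card_child_labels[OF Suc.prems] by fastforce+
  then obtain S where S: "S \<subseteq> child_labels j i" "card S + of_bool c = b j"
    by (metis obtain_subset_with_card_n le_add_diff_inverse2)
  have "\<forall>k\<in>child_labels j i. \<exists>M. M \<in> perfect_tbms t k j (k \<in> S)"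
    using Suc.IH child_labels_edge by blast
  then obtain Mk where "\<And>k. k \<in> child_labels j i \<Longrightarrow> Mk k \<in> perfect_tbms t k j (k \<in> S)"
    by metis
  then show ?case using graft_in_perfect_tbms(1)[OF Suc.prems S] by blast
qed

definition min_tbm_weight_rec :: "nat \<Rightarrow> nat \<Rightarrow> nat \<Rightarrow> bool \<Rightarrow> real" where
  "min_tbm_weight_rec t j i c = (if c then w i j else 0)
    + (\<Sum>k\<in>child_labels j i. min_tbm_weight t k j False)
    + min_subset_sum (child_labels j i) (\<lambda>k. min_tbm_weight t k j True - min_tbm_weight t k j False)
        (b j - of_bool c)"

lemma sum_min_tbm_weight_mem:
  assumes "S \<subseteq> child_labels j i"
  shows "(\<Sum>k\<in>child_labels j i. min_tbm_weight t k j (k \<in> S))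
    = (\<Sum>k\<in>child_labels j i. min_tbm_weight t k j False)
      + (\<Sum>k\<in>S. min_tbm_weight t k j True - min_tbm_weight t k j False)"
proof -
  have "(\<Sum>k\<in>child_labels j i. min_tbm_weight t k j (k \<in> S))
      = (\<Sum>k\<in>child_labels j i. if k \<in> S then min_tbm_weight t k j True else min_tbm_weight t k j False)"
    by (rule sum.cong) auto
  then show ?thesis using sum_if_mem_eq[OF finite_child_labels assms] by simp
qed

lemma min_tbm_weight_rec_le:
  assumes ij: "E i j" and M: "M \<in> perfect_tbms (Suc t) j i c"
  shows "min_tbm_weight_rec t j i c \<le> tbm_weight M"
proof -
  let ?d = "\<lambda>k. min_tbm_weight t k j True - min_tbm_weight t k j False"
  obtain S Mk where S: "S \<subseteq> child_labels j i" "card S + of_bool c = b j"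
    and Mk: "\<And>k. k \<in> child_labels j i \<Longrightarrow> Mk k \<in> perfect_tbms t k j (k \<in> S)"
    and M_eq: "M = graft i j (if c then {[i, j]} else {}) Mk"
    using perfect_tbms_SucE[OF ij M] by blast
  have "min_subset_sum (child_labels j i) ?d (b j - of_bool c) \<le> sum ?d S"
    using S by (intro min_subset_sum_le finite_child_labels) auto
  moreover have "(\<Sum>k\<in>child_labels j i. min_tbm_weight t k j (k \<in> S))
      \<le> (\<Sum>k\<in>child_labels j i. tbm_weight (Mk k))"
    using Mk by (intro sum_mono min_tbm_weight_le)
  ultimately show ?thesis
    unfolding min_tbm_weight_rec_def
    using graft_in_perfect_tbms(2)[OF ij S Mk] M_eq sum_min_tbm_weight_mem[OF S(1)] by simp
qed

lemma min_tbm_weight_rec_attained: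
  assumes ij: "E i j"
  shows "min_tbm_weight_rec t j i c \<in> tbm_weight ` perfect_tbms (Suc t) j i c"
proof -
  let ?d = "\<lambda>k. min_tbm_weight t k j True - min_tbm_weight t k j False"
  have j: "j \<in> {1..n}" using E_in_V[OF ij] by auto
  then have "b j - of_bool c \<le> card (child_labels j i)" using deg card_child_labels[OF ij] by fastforce
  then obtain S where S: "S \<subseteq> child_labels j i" "card S = b j - of_bool c"
    and S_min: "sum ?d S = min_subset_sum (child_labels j i) ?d (b j - of_bool c)"
    by (rule min_subset_sum_attained[OF finite_child_labels])
  have S_card: "card S + of_bool c = b j" using S(2) b_pos[OF j] by simp
  have "\<exists>M. M \<in> perfect_tbms t k j (k \<in> S) \<and> tbm_weight M = min_tbm_weight t k j (k \<in> S)"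
    if "k \<in> child_labels j i" for k
  proof -
    have "perfect_tbms t k j (k \<in> S) \<noteq> {}"
      using child_labels_edge[OF that] by (intro perfect_tbms_nonempty) simp
    then obtain M where "M \<in> perfect_tbms t k j (k \<in> S)" "tbm_weight M = min_tbm_weight t k j (k \<in> S)"
      by (rule min_tbm_weight_attained)
    then show ?thesis by blast
  qed
  then obtain Mk where Mk: "\<And>k. k \<in> child_labels j i \<Longrightarrow> Mk k \<in> perfect_tbms t k j (k \<in> S)"
    and Mk_min: "\<And>k. k \<in> child_labels j i \<Longrightarrow> tbm_weight (Mk k) = min_tbm_weight t k j (k \<in> S)"
    by metis
  have "(\<Sum>k\<in>child_labels j i. tbm_weight (Mk k)) = (\<Sum>k\<in>child_labels j i. min_tbm_weight t k j (k \<in> S))"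
    using Mk_min by (rule sum.cong[OF refl])
  then have "tbm_weight (graft i j (if c then {[i, j]} else {}) Mk) = min_tbm_weight_rec t j i c"
    unfolding min_tbm_weight_rec_def
    using graft_in_perfect_tbms(2)[OF ij S(1) S_card Mk] sum_min_tbm_weight_mem[OF S(1)] S_min by simp
  then show ?thesis using graft_in_perfect_tbms(1)[OF ij S(1) S_card Mk] by (rule image_eqI[OF sym])
qed

lemma min_tbm_weight_Suc: "E i j \<Longrightarrow> min_tbm_weight (Suc t) j i c = min_tbm_weight_rec t j i c"
  unfolding min_tbm_weight_def using finite_perfect_tbms min_tbm_weight_rec_le min_tbm_weight_rec_attained
  by (intro Min_eqI) auto

lemma min_tbm_weight_diff_eq_msg:
  "E i j \<Longrightarrow> min_tbm_weight t j i True - min_tbm_weight t j i False = msg n E w b t j i"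
proof (induction t arbitrary: i j)
  case 0
  have "perfect_tbms 0 j i c = {if c then {[i, j]} else {}}" for c
    unfolding perfect_tbms_def perfect_tbm_def sub_edges_0[OF 0] by (cases c) auto
  then show ?case
    unfolding min_tbm_weight_def
    using tbm_weight_root_part[of True i j] tbm_weight_root_part[of False i j] w_sym[OF 0] by simp
next
  case (Suc t)
  let ?C = "child_labels j i"
  let ?d = "\<lambda>k. min_tbm_weight t k j True - min_tbm_weight t k j False"
  have j: "j \<in> {1..n}" using E_in_V[OF Suc.prems] by auto
  have "min_tbm_weight (Suc t) j i True - min_tbm_weight (Suc t) j i False
      = w i j - (min_subset_sum ?C ?d (b j) - min_subset_sum ?C ?d (b j - 1))"
    using min_tbm_weight_Suc[OF Suc.prems] by (simp add: min_tbm_weight_rec_def)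
  also have "\<dots> = w i j - kth_smallest (b j) (image_mset ?d (mset_set ?C))"
    using min_subset_sum_diff_eq_kth_smallest[OF finite_child_labels] b_pos[OF j] deg[OF j]
      card_child_labels[OF Suc.prems] by simp
  also have "image_mset ?d (mset_set ?C) = image_mset (\<lambda>k. msg n E w b t k j) (mset_set ?C)"
    using Suc.IH child_labels_edge finite_child_labels by (intro image_mset_cong) simp
  finally show ?case using w_sym[OF Suc.prems] by (simp add: child_labels_def)
qed

end

theorem lemma1:
  fixes n :: nat and E :: "nat \<Rightarrow> nat \<Rightarrow> bool" and w :: "nat \<Rightarrow> nat \<Rightarrow> real"
    and b :: "nat \<Rightarrow> nat"
  assumes E_in_V: "\<And>i j. E i j \<Longrightarrow> i \<in> {1..n} \<and> j \<in> {1..n}"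
    and E_sym: "\<And>i j. E i j \<Longrightarrow> E j i"
    and E_irrefl: "\<And>i. \<not> E i i"
    and w_sym: "\<And>i j. E i j \<Longrightarrow> w i j = w j i"
    and b_pos: "\<And>i. i \<in> {1..n} \<Longrightarrow> 1 \<le> b i"
    and deg: "\<And>i. i \<in> {1..n} \<Longrightarrow> b i + 1 \<le> card (nbr n E i)"
    and edge: "E i j"
  shows "tree_msg n E w b t j i = msg n E w b t j i"
proof -
  interpret bmatching_graph n E w b
    using E_in_V E_sym w_sym b_pos deg by unfold_locales
  have "W_plus n E w b t j i = min_tbm_weight t j i True"
    and "W_minus n E w b t j i = min_tbm_weight t j i False"
    unfolding W_plus_def W_minus_def min_tbm_weight_def perfect_tbms_def tbm_weight_def[abs_def]
    by simp_all
  then show ?thesis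
    unfolding tree_msg_def using min_tbm_weight_diff_eq_msg[OF edge] by simp
qed

end
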